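(* Let $A\in\mathbb{R}^{m\times m}$ be positive definite, $B\in\mathbb{R}^{m\times n}$ ($n\le m$), $\alpha\ge0$, $\beta>0$. Then every eigenvalue $\lambda$ of $\mathcal{P}_{MGSSP}^{-1}\mathcal{A}$ satisfies $|\lambda-\tfrac12|\le\tfrac12$. If moreover $B$ has full column rank, then every eigenvalue of $\mathcal{P}_{MGSSP}^{-1}\mathcal{A}$ has positive real part.
   Context: A real square matrix $A$ is called positive definite if $x^TAx>0$ for all nonzero $x\in\mathbb{R}^m$ ($A$ need not be symmetric). $\mathcal{A}=\begin{pmatrix}A & B\\ -B^T & 0\end{pmatrix}$ and, for $\alpha\ge0,\beta>0$, $\mathcal{P}_{MGSSP}=\begin{pmatrix}\alpha I+2A & 2B\\ -2B^T & \beta I\end{pmatrix}$ (which is nonsingular). *)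

theory Defs
  imports "Jordan_Normal_Form.Gauss_Jordan_Elimination" "Jordan_Normal_Form.Char_Poly"
          "Jordan_Normal_Form.DL_Rank"
begin

definition pos_def_mat :: "real mat \<Rightarrow> bool" where
  "pos_def_mat A \<longleftrightarrow> A \<in> carrier_mat (dim_row A) (dim_row A) \<and>
     (\<forall>x \<in> carrier_vec (dim_row A). x \<noteq> 0\<^sub>v (dim_row A) \<longrightarrow> x \<bullet> (A *\<^sub>v x) > 0)"

definition saddle_mat :: "real mat \<Rightarrow> real mat \<Rightarrow> real mat" where
  "saddle_mat A B = four_block_mat A B (- transpose_mat B) (0\<^sub>m (dim_col B) (dim_col B))"

definition P_MGSSP :: "real \<Rightarrow> real \<Rightarrow> real mat \<Rightarrow> real mat \<Rightarrow> real mat" where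
  "P_MGSSP \<alpha> \<beta> A B = four_block_mat (\<alpha> \<cdot>\<^sub>m 1\<^sub>m (dim_row A) + 2 \<cdot>\<^sub>m A) (2 \<cdot>\<^sub>m B)
      (- (2 \<cdot>\<^sub>m transpose_mat B)) (\<beta> \<cdot>\<^sub>m 1\<^sub>m (dim_col B))"

end

theory Submission
  imports Defs
begin

text \<open>Write S for the saddle point matrix and P = 2 S + D with D = diag(alpha I, beta I).
If P^-1 S v = lam v, then S v = lam P v, and applying the form v^* M v gives z = lam (2 z + e)
with z = v^* S v and e = v^* D v >= 0. The off-diagonal blocks of S are skew, so
Re z = x_r^T A x_r + x_i^T A x_i >= 0 for the real and imaginary parts of the first block of v.
Hence lam - 1/2 = -e / (2 (2 z + e)) has modulus at most 1/2 because Re (2 z + e) >= e, and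
Re lam = (2 |z|^2 + e Re z) / |2 z + e|^2 > 0 as soon as lam <> 0, which holds when B has full
column rank since S is then nonsingular. The same positivity, Re v^* P v > 0, makes P invertible.\<close>

lemma Re_conjugate_scalar_prod:
  fixes v w :: "complex vec"
  assumes "v \<in> carrier_vec n" and "w \<in> carrier_vec n"
  shows "Re (conjugate v \<bullet> w) = map_vec Re v \<bullet> map_vec Re w + map_vec Im v \<bullet> map_vec Im w"
  using assms by (simp add: scalar_prod_def Re_sum sum.distrib)

lemma map_vec_Re_of_real_mult_mat_vec:
  fixes M :: "real mat" and v :: "complex vec"
  assumes "M \<in> carrier_mat k l" and "v \<in> carrier_vec l"
  shows "map_vec Re (map_mat complex_of_real M *\<^sub>v v) = M *\<^sub>v map_vec Re v"
  using assms by (intro eq_vecI) (auto simp: scalar_prod_def Re_sum)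

lemma map_vec_Im_of_real_mult_mat_vec:
  fixes M :: "real mat" and v :: "complex vec"
  assumes "M \<in> carrier_mat k l" and "v \<in> carrier_vec l"
  shows "map_vec Im (map_mat complex_of_real M *\<^sub>v v) = M *\<^sub>v map_vec Im v"
  using assms by (intro eq_vecI) (auto simp: scalar_prod_def Im_sum)

lemma complex_vec_eq_zero_iff:
  fixes v :: "complex vec"
  assumes "v \<in> carrier_vec n"
  shows "v = 0\<^sub>v n \<longleftrightarrow> map_vec Re v = 0\<^sub>v n \<and> map_vec Im v = 0\<^sub>v n"
  using assms by (auto simp: vec_eq_iff complex_eq_iff)

definition cquad :: "real mat \<Rightarrow> complex vec \<Rightarrow> complex" where
  "cquad M v = conjugate v \<bullet> (map_mat complex_of_real M *\<^sub>v v)"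

lemma Re_cquad:
  assumes "M \<in> carrier_mat n n" and "v \<in> carrier_vec n"
  shows "Re (cquad M v) = map_vec Re v \<bullet> (M *\<^sub>v map_vec Re v) + map_vec Im v \<bullet> (M *\<^sub>v map_vec Im v)"
  using assms unfolding cquad_def
  by (simp add: Re_conjugate_scalar_prod[of _ n] map_vec_Re_of_real_mult_mat_vec
      map_vec_Im_of_real_mult_mat_vec)

lemma cquad_eq_double_sum:
  assumes "M \<in> carrier_mat n n" and "v \<in> carrier_vec n"
  shows "cquad M v = (\<Sum>i<n. \<Sum>j<n. cnj (v $ i) * complex_of_real (M $$ (i, j)) * v $ j)"
  using assms unfolding cquad_def
  by (simp add: scalar_prod_def sum_distrib_left mult.assoc atLeast0LessThan)

lemma cquad_add:
  assumes "M \<in> carrier_mat n n" and "N \<in> carrier_mat n n" and "v \<in> carrier_vec n"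
  shows "cquad (M + N) v = cquad M v + cquad N v"
  using assms by (simp add: cquad_eq_double_sum[of _ n] distrib_left distrib_right sum.distrib)

lemma cquad_smult:
  assumes "M \<in> carrier_mat n n" and "v \<in> carrier_vec n"
  shows "cquad (c \<cdot>\<^sub>m M) v = complex_of_real c * cquad M v"
  using assms by (simp add: cquad_eq_double_sum[of _ n] sum_distrib_left ac_simps)

lemma cquad_mat_diag:
  assumes "v \<in> carrier_vec n"
  shows "cquad (mat_diag n f) v = complex_of_real (\<Sum>i<n. f i * (cmod (v $ i))\<^sup>2)"
proof -
  have "cquad (mat_diag n f) v = (\<Sum>i<n. cnj (v $ i) * complex_of_real (f i) * v $ i)"
    using assms by (simp add: cquad_eq_double_sum[of _ n] mat_diag_def if_distrib if_distribR cong: if_cong)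
  also have "\<dots> = (\<Sum>i<n. complex_of_real (f i * (cmod (v $ i))\<^sup>2))"
    by (intro sum.cong refl) (simp only: of_real_mult complex_norm_square mult_ac)
  finally show ?thesis by simp
qed

lemma pos_def_mat_quad_pos:
  assumes "pos_def_mat A" and "A \<in> carrier_mat m m" and "x \<in> carrier_vec m" and "x \<noteq> 0\<^sub>v m"
  shows "0 < x \<bullet> (A *\<^sub>v x)"
  using assms unfolding pos_def_mat_def by auto

lemma pos_def_mat_quad_nonneg:
  assumes "pos_def_mat A" and "A \<in> carrier_mat m m" and "x \<in> carrier_vec m"
  shows "0 \<le> x \<bullet> (A *\<^sub>v x)"
  using assms pos_def_mat_quad_pos[OF assms] by (cases "x = 0\<^sub>v m") auto

lemma pos_def_mat_quad_eq_0_iff: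
  assumes "pos_def_mat A" and "A \<in> carrier_mat m m" and "x \<in> carrier_vec m"
  shows "x \<bullet> (A *\<^sub>v x) = 0 \<longleftrightarrow> x = 0\<^sub>v m"
  using assms pos_def_mat_quad_pos[OF assms] by (cases "x = 0\<^sub>v m") auto

lemma full_col_rank_mult_vec_eq_zero:
  fixes B :: "'a :: field mat"
  assumes B: "B \<in> carrier_mat m n" and rank: "vec_space.rank m B = n"
    and y: "y \<in> carrier_vec n" and By: "B *\<^sub>v y = 0\<^sub>v m"
  shows "y = 0\<^sub>v n"
proof (rule ccontr)
  interpret vec_space "TYPE('a)" m .
  assume y0: "y \<noteq> 0\<^sub>v n"
  have "distinct (cols B)"
  proof (rule ccontr)
    assume "\<not> distinct (cols B)"
    hence card_lt: "card (set (cols B)) < n"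
      using B card_distinct card_length[of "cols B"] by (metis cols_length carrier_matD(2) le_neq_implies_less)
    obtain S where S: "maximal S (\<lambda>T. T \<subseteq> set (cols B) \<and> lin_indpt T)"
      using maximal_exists[of "\<lambda>T. T \<subseteq> set (cols B) \<and> lin_indpt T" "card (set (cols B))" "{}"]
      by (meson List.finite_set card_mono empty_iff empty_subsetI finite_lin_indpt2 rev_finite_subset)
    have "card S \<le> card (set (cols B))"
      using S by (simp add: card_mono maximal_def)
    thus False using rank_card_indpt[OF B S] rank card_lt by linarith
  qed
  thus False using lin_depI[OF B y y0 By] full_rank_lin_indpt[OF B rank] by blast
qed

lemma mat_inverse_of_trivial_kernel:
  fixes P :: "'a :: field mat"
  assumes P: "P \<in> carrier_mat n n" and ker: "\<And>u. u \<in> carrier_vec n \<Longrightarrow> P *\<^sub>v u = 0\<^sub>v n \<Longrightarrow> u = 0\<^sub>v n"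
  shows "the (mat_inverse P) \<in> carrier_mat n n" and "P * the (mat_inverse P) = 1\<^sub>m n"
proof -
  have "det P \<noteq> 0" using ker det_0_iff_vec_prod_zero_field[OF P] by blast
  hence "P \<in> Units (ring_mat TYPE('a) n ())" by (rule det_non_zero_imp_unit[OF P])
  then obtain Q where "mat_inverse P = Some Q"
    using mat_inverse(1)[OF P, of "()"] by (cases "mat_inverse P") auto
  thus "the (mat_inverse P) \<in> carrier_mat n n" and "P * the (mat_inverse P) = 1\<^sub>m n"
    using mat_inverse(2)[OF P] by auto
qed

lemma of_real_eigenvector_inverse_mult:
  fixes P Q S :: "real mat"
  assumes P: "P \<in> carrier_mat N N" and Q: "Q \<in> carrier_mat N N" and S: "S \<in> carrier_mat N N"
    and PQ: "P * Q = 1\<^sub>m N" and ev: "eigenvector (map_mat complex_of_real (Q * S)) v lam"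
  shows "map_mat complex_of_real S *\<^sub>v v = lam \<cdot>\<^sub>v (map_mat complex_of_real P *\<^sub>v v)"
proof -
  let ?P = "map_mat complex_of_real P" and ?Q = "map_mat complex_of_real Q"
    and ?S = "map_mat complex_of_real S"
  have v: "v \<in> carrier_vec N" and QSv: "(?Q * ?S) *\<^sub>v v = lam \<cdot>\<^sub>v v"
    using ev Q unfolding eigenvector_def of_real_hom.mat_hom_mult[OF Q S] by auto
  have "?P * ?Q = 1\<^sub>m N"
    using of_real_hom.mat_hom_mult[OF P Q] PQ of_real_hom.mat_hom_one by metis
  hence "?S *\<^sub>v v = (?P * ?Q * ?S) *\<^sub>v v" using S by simp
  also have "\<dots> = ?P *\<^sub>v ((?Q * ?S) *\<^sub>v v)"
    using P Q S v by (simp add: assoc_mult_mat_vec[of _ N N _ N])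
  also have "\<dots> = lam \<cdot>\<^sub>v (?P *\<^sub>v v)" unfolding QSv using P v by (simp add: mult_mat_vec)
  finally show ?thesis .
qed

lemma cmod_sub_half_le_half:
  fixes z lam :: complex and e :: real
  assumes z: "0 \<le> Re z" and e: "0 \<le> e" and w: "2 * z + complex_of_real e \<noteq> 0"
    and eq: "z = lam * (2 * z + complex_of_real e)"
  shows "cmod (lam - 1/2) \<le> 1/2"
proof -
  define w where "w = 2 * z + complex_of_real e"
  have w0: "w \<noteq> 0" using w unfolding w_def .
  have lam: "lam = z / w" using eq w0 unfolding w_def[symmetric] by (simp add: field_simps)
  have "lam - 1/2 = - complex_of_real e / (2 * w)"
    using w0 unfolding lam by (simp add: field_simps w_def)
  hence "cmod (lam - 1/2) = e / (2 * cmod w)"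
    using e by (simp add: norm_divide norm_mult)
  also have "\<dots> \<le> cmod w / (2 * cmod w)"
    using complex_Re_le_cmod[of w] z e unfolding w_def by (intro divide_right_mono) auto
  also have "\<dots> = 1/2" using w0 by simp
  finally show ?thesis .
qed

lemma Re_pos_of_nonzero:
  fixes z lam :: complex and e :: real
  assumes z: "0 \<le> Re z" and e: "0 \<le> e" and w: "2 * z + complex_of_real e \<noteq> 0"
    and eq: "z = lam * (2 * z + complex_of_real e)" and lam: "lam \<noteq> 0"
  shows "0 < Re lam"
proof -
  define w where "w = 2 * z + complex_of_real e"
  have w0: "w \<noteq> 0" using w unfolding w_def .
  have z0: "z \<noteq> 0" using eq lam w0 unfolding w_def[symmetric] by simp
  have "lam = z / w" using eq w0 unfolding w_def[symmetric] by (simp add: field_simps)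
  hence "Re lam = (Re z * Re w + Im z * Im w) / ((Re w)\<^sup>2 + (Im w)\<^sup>2)"
    by (simp add: Re_divide)
  also have "Re z * Re w + Im z * Im w = 2 * ((Re z)\<^sup>2 + (Im z)\<^sup>2) + e * Re z"
    unfolding w_def by (simp add: power2_eq_square algebra_simps)
  finally have Re_lam: "Re lam = (2 * ((Re z)\<^sup>2 + (Im z)\<^sup>2) + e * Re z) / ((Re w)\<^sup>2 + (Im w)\<^sup>2)" .
  have "0 < (Re z)\<^sup>2 + (Im z)\<^sup>2" and den: "0 < (Re w)\<^sup>2 + (Im w)\<^sup>2"
    using z0 w0 by (simp_all add: complex_eq_iff sum_power2_gt_zero_iff)
  then show ?thesis
    unfolding Re_lam using z e by (intro divide_pos_pos[OF _ den] add_pos_nonneg) auto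
qed

lemma saddle_mat_carrier:
  assumes "A \<in> carrier_mat m m" and "B \<in> carrier_mat m n"
  shows "saddle_mat A B \<in> carrier_mat (m + n) (m + n)"
  using assms unfolding saddle_mat_def by auto

lemma saddle_mat_mult_append_vec:
  assumes A: "A \<in> carrier_mat m m" and B: "B \<in> carrier_mat m n"
    and x: "x \<in> carrier_vec m" and y: "y \<in> carrier_vec n"
  shows "saddle_mat A B *\<^sub>v (x @\<^sub>v y) = (A *\<^sub>v x + B *\<^sub>v y) @\<^sub>v - (transpose_mat B *\<^sub>v x)"
proof -
  have dim_B: "dim_col B = n" using B by simp
  have "saddle_mat A B *\<^sub>v (x @\<^sub>v y) =
      (A *\<^sub>v x + B *\<^sub>v y) @\<^sub>v (- transpose_mat B *\<^sub>v x + 0\<^sub>m n n *\<^sub>v y)"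
    unfolding saddle_mat_def dim_B by (rule four_block_mat_mult_vec[OF A B _ _ x y]) (use B in auto)
  also have "- transpose_mat B *\<^sub>v x + 0\<^sub>m n n *\<^sub>v y = - (transpose_mat B *\<^sub>v x)"
    using B x y by (intro eq_vecI) (auto simp: scalar_prod_def)
  finally show ?thesis .
qed

lemma saddle_mat_quad:
  assumes A: "A \<in> carrier_mat m m" and B: "B \<in> carrier_mat m n" and u: "u \<in> carrier_vec (m + n)"
  shows "u \<bullet> (saddle_mat A B *\<^sub>v u) = vec_first u m \<bullet> (A *\<^sub>v vec_first u m)"
proof -
  define x y where "x = vec_first u m" and "y = vec_last u n"
  have x: "x \<in> carrier_vec m" and y: "y \<in> carrier_vec n" and u_eq: "u = x @\<^sub>v y"
    using u unfolding x_def y_def by auto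
  have "u \<bullet> (saddle_mat A B *\<^sub>v u) = x \<bullet> (A *\<^sub>v x) + x \<bullet> (B *\<^sub>v y) - y \<bullet> (transpose_mat B *\<^sub>v x)"
    unfolding u_eq saddle_mat_mult_append_vec[OF A B x y] using A B x y
    by (simp add: scalar_prod_append[of _ m _ n] scalar_prod_add_distrib[of _ m])
  also have "y \<bullet> (transpose_mat B *\<^sub>v x) = x \<bullet> (B *\<^sub>v y)"
    using B x y by (metis comm_scalar_prod mult_mat_vec_carrier transpose_carrier_mat transpose_vec_mult_scalar)
  finally show ?thesis unfolding x_def by simp
qed

lemma saddle_mat_mult_vec_eq_zero:
  assumes A: "A \<in> carrier_mat m m" and B: "B \<in> carrier_mat m n" and pd: "pos_def_mat A"
    and rank: "vec_space.rank m B = n"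
    and u: "u \<in> carrier_vec (m + n)" and Su: "saddle_mat A B *\<^sub>v u = 0\<^sub>v (m + n)"
  shows "u = 0\<^sub>v (m + n)"
proof -
  define x y where "x = vec_first u m" and "y = vec_last u n"
  have x: "x \<in> carrier_vec m" and y: "y \<in> carrier_vec n" and u_eq: "u = x @\<^sub>v y"
    using u unfolding x_def y_def by auto
  have "x \<bullet> (A *\<^sub>v x) = 0"
    using saddle_mat_quad[OF A B u] Su u unfolding x_def by simp
  hence x0: "x = 0\<^sub>v m" using pos_def_mat_quad_eq_0_iff[OF pd A x] by simp
  have zero_split: "0\<^sub>v (m + n) = 0\<^sub>v m @\<^sub>v (0\<^sub>v n :: real vec)"
    by (intro eq_vecI) auto
  have "(A *\<^sub>v x + B *\<^sub>v y) @\<^sub>v - (transpose_mat B *\<^sub>v x) = 0\<^sub>v m @\<^sub>v 0\<^sub>v n"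
    using Su unfolding u_eq saddle_mat_mult_append_vec[OF A B x y] zero_split .
  hence "A *\<^sub>v x + B *\<^sub>v y = 0\<^sub>v m"
    using append_vec_eq[of "A *\<^sub>v x + B *\<^sub>v y" m "0\<^sub>v m"] A B x y by auto
  moreover have "A *\<^sub>v x = 0\<^sub>v m"
    using A unfolding x0 by (intro eq_vecI) (auto simp: scalar_prod_def)
  ultimately have "B *\<^sub>v y = 0\<^sub>v m" using B y by simp
  hence "y = 0\<^sub>v n" by (rule full_col_rank_mult_vec_eq_zero[OF B rank y])
  thus ?thesis unfolding u_eq x0 zero_split by simp
qed

lemma saddle_mat_of_real_mult_vec_eq_zero:
  assumes A: "A \<in> carrier_mat m m" and B: "B \<in> carrier_mat m n" and pd: "pos_def_mat A"
    and rank: "vec_space.rank m B = n"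
    and v: "v \<in> carrier_vec (m + n)" and Sv: "map_mat complex_of_real (saddle_mat A B) *\<^sub>v v = 0\<^sub>v (m + n)"
  shows "v = 0\<^sub>v (m + n)"
proof -
  note S = saddle_mat_carrier[OF A B]
  have "map_vec Re (0\<^sub>v (m + n)) = 0\<^sub>v (m + n)" "map_vec Im (0\<^sub>v (m + n)) = 0\<^sub>v (m + n)"
    by auto
  hence "saddle_mat A B *\<^sub>v map_vec Re v = 0\<^sub>v (m + n)"
    and "saddle_mat A B *\<^sub>v map_vec Im v = 0\<^sub>v (m + n)"
    using map_vec_Re_of_real_mult_mat_vec[OF S v] map_vec_Im_of_real_mult_mat_vec[OF S v]
    unfolding Sv by simp_all
  then show ?thesis
    using saddle_mat_mult_vec_eq_zero[OF A B pd rank] complex_vec_eq_zero_iff[OF v] v by auto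
qed

lemma Re_cquad_saddle_mat:
  assumes A: "A \<in> carrier_mat m m" and B: "B \<in> carrier_mat m n" and v: "v \<in> carrier_vec (m + n)"
  shows "Re (cquad (saddle_mat A B) v) =
    vec_first (map_vec Re v) m \<bullet> (A *\<^sub>v vec_first (map_vec Re v) m) +
    vec_first (map_vec Im v) m \<bullet> (A *\<^sub>v vec_first (map_vec Im v) m)"
  using Re_cquad[OF saddle_mat_carrier[OF A B] v] saddle_mat_quad[OF A B] v by simp

lemma Re_cquad_saddle_mat_nonneg:
  assumes A: "A \<in> carrier_mat m m" and B: "B \<in> carrier_mat m n" and pd: "pos_def_mat A"
    and v: "v \<in> carrier_vec (m + n)"
  shows "0 \<le> Re (cquad (saddle_mat A B) v)"
  unfolding Re_cquad_saddle_mat[OF A B v]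
  by (intro add_nonneg_nonneg pos_def_mat_quad_nonneg[OF pd A]) auto

lemma P_MGSSP_eq:
  assumes A: "A \<in> carrier_mat m m" and B: "B \<in> carrier_mat m n"
  shows "P_MGSSP \<alpha> \<beta> A B = 2 \<cdot>\<^sub>m saddle_mat A B + mat_diag (m + n) (\<lambda>i. if i < m then \<alpha> else \<beta>)"
proof (rule eq_matI)
  fix i j assume "i < dim_row (2 \<cdot>\<^sub>m saddle_mat A B + mat_diag (m + n) (\<lambda>i. if i < m then \<alpha> else \<beta>))"
    and "j < dim_col (2 \<cdot>\<^sub>m saddle_mat A B + mat_diag (m + n) (\<lambda>i. if i < m then \<alpha> else \<beta>))"
  with A B show "P_MGSSP \<alpha> \<beta> A B $$ (i, j) =
      (2 \<cdot>\<^sub>m saddle_mat A B + mat_diag (m + n) (\<lambda>i. if i < m then \<alpha> else \<beta>)) $$ (i, j)"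
    unfolding P_MGSSP_def saddle_mat_def mat_diag_def
    by (cases "i < m"; cases "j < m") auto
qed (use A B in \<open>auto simp: P_MGSSP_def saddle_mat_def mat_diag_def\<close>)

lemma P_MGSSP_carrier:
  assumes "A \<in> carrier_mat m m" and "B \<in> carrier_mat m n"
  shows "P_MGSSP \<alpha> \<beta> A B \<in> carrier_mat (m + n) (m + n)"
  using assms unfolding P_MGSSP_def by auto

lemma cquad_P_MGSSP:
  assumes A: "A \<in> carrier_mat m m" and B: "B \<in> carrier_mat m n" and v: "v \<in> carrier_vec (m + n)"
  shows "cquad (P_MGSSP \<alpha> \<beta> A B) v = 2 * cquad (saddle_mat A B) v +
    complex_of_real (\<Sum>i<m + n. (if i < m then \<alpha> else \<beta>) * (cmod (v $ i))\<^sup>2)"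
  using saddle_mat_carrier[OF A B] v unfolding P_MGSSP_eq[OF A B]
  by (simp add: cquad_add[of _ "m + n"] cquad_smult[of _ "m + n"] cquad_mat_diag)

lemma Re_cquad_P_MGSSP_pos:
  assumes A: "A \<in> carrier_mat m m" and B: "B \<in> carrier_mat m n" and pd: "pos_def_mat A"
    and \<alpha>: "0 \<le> \<alpha>" and \<beta>: "0 < \<beta>"
    and v: "v \<in> carrier_vec (m + n)" and v0: "v \<noteq> 0\<^sub>v (m + n)"
  shows "0 < Re (cquad (P_MGSSP \<alpha> \<beta> A B) v)"
proof (rule ccontr)
  define xr xi where "xr = vec_first (map_vec Re v) m" and "xi = vec_first (map_vec Im v) m"
  define f where "f i = (if i < m then \<alpha> else \<beta>) * (cmod (v $ i))\<^sup>2" for i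
  have xr: "xr \<in> carrier_vec m" and xi: "xi \<in> carrier_vec m" unfolding xr_def xi_def by auto
  have qr: "0 \<le> xr \<bullet> (A *\<^sub>v xr)" and qi: "0 \<le> xi \<bullet> (A *\<^sub>v xi)"
    using pos_def_mat_quad_nonneg[OF pd A] xr xi by auto
  have f_nonneg: "0 \<le> f i" for i
    using \<alpha> \<beta> unfolding f_def by simp
  assume "\<not> 0 < Re (cquad (P_MGSSP \<alpha> \<beta> A B) v)"
  hence "2 * (xr \<bullet> (A *\<^sub>v xr) + xi \<bullet> (A *\<^sub>v xi)) + sum f {..<m + n} \<le> 0"
    by (simp add: cquad_P_MGSSP[OF A B v] Re_cquad_saddle_mat[OF A B v] xr_def xi_def f_def)
  moreover have "0 \<le> sum f {..<m + n}" by (intro sum_nonneg f_nonneg)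
  ultimately have "xr \<bullet> (A *\<^sub>v xr) = 0" "xi \<bullet> (A *\<^sub>v xi) = 0" "sum f {..<m + n} = 0"
    using qr qi by (simp_all add: distrib_left)
  hence xr0: "xr = 0\<^sub>v m" and xi0: "xi = 0\<^sub>v m" and f0: "\<forall>i<m + n. f i = 0"
    using pos_def_mat_quad_eq_0_iff[OF pd A] xr xi sum_nonneg_eq_0_iff[of "{..<m + n}" f] f_nonneg
    by auto
  have "v $ i = 0" if i: "i < m + n" for i
  proof (cases "i < m")
    case True
    then have "xr $ i = 0" "xi $ i = 0" using xr0 xi0 by auto
    then show ?thesis using True i v unfolding xr_def xi_def vec_first_def by (simp add: complex_eq_iff)
  next
    case False
    then show ?thesis using f0 i \<beta> unfolding f_def by auto
  qed
  with v v0 show False by (auto simp: vec_eq_iff)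
qed

lemma P_MGSSP_mult_vec_eq_zero:
  assumes A: "A \<in> carrier_mat m m" and B: "B \<in> carrier_mat m n" and pd: "pos_def_mat A"
    and \<alpha>: "0 \<le> \<alpha>" and \<beta>: "0 < \<beta>"
    and u: "u \<in> carrier_vec (m + n)" and Pu: "P_MGSSP \<alpha> \<beta> A B *\<^sub>v u = 0\<^sub>v (m + n)"
  shows "u = 0\<^sub>v (m + n)"
proof (rule ccontr)
  define v where "v = map_vec complex_of_real u"
  have v: "v \<in> carrier_vec (m + n)" using u unfolding v_def by simp
  assume "u \<noteq> 0\<^sub>v (m + n)"
  hence "v \<noteq> 0\<^sub>v (m + n)" using u unfolding v_def by (auto simp: vec_eq_iff)
  hence "0 < Re (cquad (P_MGSSP \<alpha> \<beta> A B) v)"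
    by (rule Re_cquad_P_MGSSP_pos[OF A B pd \<alpha> \<beta> v])
  moreover have "map_mat complex_of_real (P_MGSSP \<alpha> \<beta> A B) *\<^sub>v v = 0\<^sub>v (m + n)"
    unfolding v_def of_real_hom.mult_mat_vec_hom[OF P_MGSSP_carrier[OF A B] u, symmetric] Pu
    by (rule of_real_hom.vec_hom_zero)
  ultimately show False using v by (simp add: cquad_def)
qed

lemma P_MGSSP_inverse:
  assumes A: "A \<in> carrier_mat m m" and B: "B \<in> carrier_mat m n" and pd: "pos_def_mat A"
    and \<alpha>: "0 \<le> \<alpha>" and \<beta>: "0 < \<beta>"
  shows "the (mat_inverse (P_MGSSP \<alpha> \<beta> A B)) \<in> carrier_mat (m + n) (m + n)"
    and "P_MGSSP \<alpha> \<beta> A B * the (mat_inverse (P_MGSSP \<alpha> \<beta> A B)) = 1\<^sub>m (m + n)"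
  using mat_inverse_of_trivial_kernel[OF P_MGSSP_carrier[OF A B]]
    P_MGSSP_mult_vec_eq_zero[OF A B pd \<alpha> \<beta>] by blast+

lemma eigenvalue_MGSSP_preconditioned:
  assumes A: "A \<in> carrier_mat m m" and B: "B \<in> carrier_mat m n" and pd: "pos_def_mat A"
    and \<alpha>: "0 \<le> \<alpha>" and \<beta>: "0 < \<beta>"
    and eigenvalue: "eigenvalue (map_mat complex_of_real
      (the (mat_inverse (P_MGSSP \<alpha> \<beta> A B)) * saddle_mat A B)) lam"
  shows "cmod (lam - 1/2) \<le> 1/2" and "vec_space.rank m B = n \<Longrightarrow> 0 < Re lam"
proof -
  define S P where "S = saddle_mat A B" and "P = P_MGSSP \<alpha> \<beta> A B"
  define Q where "Q = the (mat_inverse P)"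
  have S: "S \<in> carrier_mat (m + n) (m + n)" and P: "P \<in> carrier_mat (m + n) (m + n)"
    unfolding S_def P_def using saddle_mat_carrier[OF A B] P_MGSSP_carrier[OF A B] .
  have Q: "Q \<in> carrier_mat (m + n) (m + n)" and PQ: "P * Q = 1\<^sub>m (m + n)"
    unfolding Q_def P_def using P_MGSSP_inverse[OF A B pd \<alpha> \<beta>] by auto
  obtain v where ev: "eigenvector (map_mat complex_of_real (Q * S)) v lam"
    using eigenvalue unfolding eigenvalue_def S_def Q_def P_def by blast
  have v: "v \<in> carrier_vec (m + n)" and v0: "v \<noteq> 0\<^sub>v (m + n)"
    using ev Q unfolding eigenvector_def by auto
  have Sv: "map_mat complex_of_real S *\<^sub>v v = lam \<cdot>\<^sub>v (map_mat complex_of_real P *\<^sub>v v)"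
    by (rule of_real_eigenvector_inverse_mult[OF P Q S PQ ev])
  define e where "e = (\<Sum>i<m + n. (if i < m then \<alpha> else \<beta>) * (cmod (v $ i))\<^sup>2)"
  have P_S: "cquad P v = 2 * cquad S v + complex_of_real e"
    unfolding P_def S_def e_def by (rule cquad_P_MGSSP[OF A B v])
  have "cquad S v = lam * cquad P v"
    unfolding cquad_def Sv using P v by simp
  hence eq: "cquad S v = lam * (2 * cquad S v + complex_of_real e)"
    unfolding P_S .
  have Re_S: "0 \<le> Re (cquad S v)"
    unfolding S_def by (rule Re_cquad_saddle_mat_nonneg[OF A B pd v])
  have e: "0 \<le> e" unfolding e_def using \<alpha> \<beta> by (intro sum_nonneg) simp
  have "0 < Re (cquad P v)"
    unfolding P_def by (rule Re_cquad_P_MGSSP_pos[OF A B pd \<alpha> \<beta> v v0])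
  hence w: "2 * cquad S v + complex_of_real e \<noteq> 0"
    unfolding P_S by (metis less_irrefl zero_complex.sel(1))
  show "cmod (lam - 1/2) \<le> 1/2" by (rule cmod_sub_half_le_half[OF Re_S e w eq])
  assume rank: "vec_space.rank m B = n"
  have "lam \<noteq> 0"
  proof
    assume "lam = 0"
    hence "map_mat complex_of_real S *\<^sub>v v = 0\<^sub>v (m + n)" using Sv P v by auto
    thus False
      using saddle_mat_of_real_mult_vec_eq_zero[OF A B pd rank v] v0 unfolding S_def by blast
  qed
  thus "0 < Re lam" by (rule Re_pos_of_nonzero[OF Re_S e w eq])
qed

theorem mainTheorem9:
  fixes m n :: nat and A B :: "real mat" and \<alpha> \<beta> :: real
  assumes "A \<in> carrier_mat m m" and "B \<in> carrier_mat m n" and "n \<le> m"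
    and "pos_def_mat A" and "\<alpha> \<ge> 0" and "\<beta> > 0"
  shows "(\<forall>lam. eigenvalue (map_mat complex_of_real
              (the (mat_inverse (P_MGSSP \<alpha> \<beta> A B)) * saddle_mat A B)) lam
            \<longrightarrow> cmod (lam - 1/2) \<le> 1/2)
      \<and> (vec_space.rank m B = n \<longrightarrow>
          (\<forall>lam. eigenvalue (map_mat complex_of_real
              (the (mat_inverse (P_MGSSP \<alpha> \<beta> A B)) * saddle_mat A B)) lam
            \<longrightarrow> Re lam > 0))"
  using eigenvalue_MGSSP_preconditioned[OF assms(1,2,4,5,6)] by blast

end
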